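(* Let $T$ be a tree with exactly three pendant vertices and major vertex $m$. Then $1$ is an eigenvalue of $L(T)$ if and only if one of the following holds: (1) there are two distinct pendant vertices $u_1,u_2$ with $d(u_1,m)\equiv d(u_2,m)\equiv 1\pmod 3$; or (2) the pendant vertices can be labelled $u_1,u_2,u_3$ so that $d(u_1,m)\equiv 2$, $d(u_2,m)\equiv 0$ and $d(u_3,m)\equiv 0\pmod 3$.
   Context: $L(T)=D(T)-A(T)$ is the Laplacian matrix of $T$. A pendant vertex has degree $1$; a major vertex has degree at least $3$. $d$ denotes distance. *)

theory Defs
  imports "HOL-Analysis.Analysis"
begin

definition simple_graph :: "('n \<Rightarrow> 'n \<Rightarrow> bool) \<Rightarrow> bool" where
  "simple_graph E \<longleftrightarrow> (\<forall>u v. E u v \<longrightarrow> E v u) \<and> (\<forall>v. \<not> E v v)"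

definition walk :: "('n \<Rightarrow> 'n \<Rightarrow> bool) \<Rightarrow> 'n list \<Rightarrow> bool" where
  "walk E xs \<longleftrightarrow> xs \<noteq> [] \<and> (\<forall>i. Suc i < length xs \<longrightarrow> E (xs ! i) (xs ! Suc i))"

definition connected_graph :: "('n \<Rightarrow> 'n \<Rightarrow> bool) \<Rightarrow> bool" where
  "connected_graph E \<longleftrightarrow> (\<forall>u v. \<exists>xs. walk E xs \<and> hd xs = u \<and> last xs = v)"

definition has_cycle :: "('n \<Rightarrow> 'n \<Rightarrow> bool) \<Rightarrow> bool" where
  "has_cycle E \<longleftrightarrow> (\<exists>xs. 3 \<le> length xs \<and> distinct xs \<and> walk E xs \<and> E (last xs) (hd xs))"

definition is_tree :: "('n \<Rightarrow> 'n \<Rightarrow> bool) \<Rightarrow> bool" where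
  "is_tree E \<longleftrightarrow> simple_graph E \<and> connected_graph E \<and> \<not> has_cycle E"

definition degree :: "('n::finite \<Rightarrow> 'n \<Rightarrow> bool) \<Rightarrow> 'n \<Rightarrow> nat" where
  "degree E v = card {w. E v w}"

definition pendant :: "('n::finite \<Rightarrow> 'n \<Rightarrow> bool) \<Rightarrow> 'n \<Rightarrow> bool" where
  "pendant E v \<longleftrightarrow> degree E v = 1"

definition major :: "('n::finite \<Rightarrow> 'n \<Rightarrow> bool) \<Rightarrow> 'n \<Rightarrow> bool" where
  "major E v \<longleftrightarrow> degree E v \<ge> 3"

definition gdist :: "('n \<Rightarrow> 'n \<Rightarrow> bool) \<Rightarrow> 'n \<Rightarrow> 'n \<Rightarrow> nat" where
  "gdist E u v = (LEAST n. \<exists>xs. walk E xs \<and> hd xs = u \<and> last xs = v \<and> length xs = Suc n)"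

definition laplacian :: "('n::finite \<Rightarrow> 'n \<Rightarrow> bool) \<Rightarrow> real^'n^'n" where
  "laplacian E = (\<chi> i j. (if i = j then real (degree E i) else 0) - (if E i j then 1 else 0))"

definition is_eigenvalue :: "real^'n^'n \<Rightarrow> real \<Rightarrow> bool" where
  "is_eigenvalue A c \<longleftrightarrow> (\<exists>x. x \<noteq> 0 \<and> A *v x = c *\<^sub>R x)"

end

theory Submission
  imports Defs "HOL-Library.Sublist"
begin

(*
  Rooted at the major vertex, the tree is a spider: the root has exactly three children and
  every other vertex at most one, because pairwise incomparable vertices have distinct leaves
  below them and there are only three leaves.

  Along a leg, the equation L x = x says x(h+1) = x(h) - x(h-1) at the inner vertices and
  x(1) = 0 at the leaf, where h is the distance from the leaf y.  Hence x = t_y c_h on that leg,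
  with c = 1, 0, -1, -1, 0, 1, ... of period 6, vanishing exactly at h = 1 (mod 3).  What is left
  are the conditions at the centre: X = t_y c_(a_y) for every leg length a_y, and
  2 X = sum of t_y c_(a_y - 1).  A case analysis on the residues a_y mod 3 shows that these admit
  a nonzero solution exactly in the two cases of the theorem.
*)

lemma walk_Nil [simp]: "\<not> walk E []"
  by (simp add: walk_def)

lemma walk_singleton [simp]: "walk E [x]"
  by (simp add: walk_def)

lemma walk_Cons_Cons [simp]: "walk E (x # y # xs) \<longleftrightarrow> E x y \<and> walk E (y # xs)"
  unfolding walk_def by (auto simp: less_Suc_eq_0_disj)

lemma walk_append:
  assumes "xs \<noteq> []" "ys \<noteq> []"
  shows "walk E (xs @ ys) \<longleftrightarrow> walk E xs \<and> walk E ys \<and> E (last xs) (hd ys)"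
  using assms(1)
proof (induction xs rule: induct_list012)
  case (2 x)
  then show ?case using assms(2) by (cases ys) auto
qed auto

lemma walk_join:
  assumes "walk E xs" "walk E ys" "last xs = hd ys"
  shows "walk E (xs @ tl ys)"
proof (cases "tl ys")
  case (Cons z zs)
  then have "ys = hd ys # z # zs" using assms(2) by (cases ys) auto
  then have "E (hd ys) z" "walk E (z # zs)" using assms(2) by (metis walk_Cons_Cons)+
  moreover have "xs \<noteq> []" using assms(1) by auto
  ultimately show ?thesis using assms(1,3) walk_append[of xs "tl ys" E] Cons by simp
qed (use assms in simp)

lemma walk_rev:
  assumes "\<And>u v. E u v \<Longrightarrow> E v u" "walk E xs"
  shows "walk E (rev xs)"
  using assms(2)
proof (induction xs rule: induct_list012)
  case (3 x y zs)
  then show ?case using walk_append[of "rev (y # zs)" "[x]" E] assms(1) by auto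
qed auto

lemma walk_rev_join:
  assumes "\<And>u v. E u v \<Longrightarrow> E v u" "walk E xs" "walk E ys" "hd xs = hd ys"
  shows "walk E (rev xs @ tl ys)" "hd (rev xs @ tl ys) = last xs" "last (rev xs @ tl ys) = last ys"
proof -
  have "xs \<noteq> []" "ys \<noteq> []" using assms(2,3) by auto
  then show "walk E (rev xs @ tl ys)"
    using walk_join[OF walk_rev[OF assms(1,2)] assms(3)] assms(4) by (simp add: last_rev)
  show "hd (rev xs @ tl ys) = last xs" using \<open>xs \<noteq> []\<close> by (simp add: hd_rev)
  show "last (rev xs @ tl ys) = last ys"
  proof (cases "tl ys")
    case Nil
    then have "ys = [hd ys]" using \<open>ys \<noteq> []\<close> by (cases ys) auto
    then show ?thesis using Nil assms(4) \<open>xs \<noteq> []\<close> by (simp add: last_rev) (metis last_ConsL)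
  next
    case Cons
    then have "tl ys \<noteq> []" by simp
    then show ?thesis by (simp add: last_tl)
  qed
qed

lemma walk_take: "walk E xs \<Longrightarrow> 0 < n \<Longrightarrow> walk E (take n xs)"
  unfolding walk_def by auto

definition graph_path :: "('n \<Rightarrow> 'n \<Rightarrow> bool) \<Rightarrow> 'n list \<Rightarrow> bool" where
  "graph_path E xs \<longleftrightarrow> walk E xs \<and> distinct xs"

lemma walk_shorten_to_path:
  assumes "walk E xs"
  obtains ys where "graph_path E ys" "hd ys = hd xs" "last ys = last xs"
    "set ys \<subseteq> set xs" "length ys \<le> length xs"
  using assms
proof (induction "length xs" arbitrary: xs thesis rule: less_induct)
  case less
  show ?case
  proof (cases "distinct xs")
    case True
    then show ?thesis using less.prems by (auto simp: graph_path_def)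
  next
    case False
    then obtain p y q s where xs: "xs = p @ [y] @ q @ [y] @ s"
      using not_distinct_decomp by blast
    define xs' where "xs' = p @ [y] @ s"
    have "walk E (p @ [y])" "walk E ([y] @ s)"
      using less.prems(2) walk_append[of "p @ [y]" "q @ [y] @ s" E]
        walk_append[of "p @ [y] @ q" "[y] @ s" E] by (auto simp: xs)
    then have "walk E xs'"
      using walk_join[of E "p @ [y]" "[y] @ s"] by (simp add: xs'_def)
    moreover have "length xs' < length xs" by (simp add: xs xs'_def)
    moreover have "hd xs' = hd xs" by (cases p) (simp_all add: xs xs'_def)
    moreover have "last xs' = last xs" by (cases s) (simp_all add: xs xs'_def)
    moreover have "set xs' \<subseteq> set xs" by (auto simp: xs xs'_def)
    ultimately show ?thesis
      using less.hyps[of xs'] less.prems(1) by (metis dual_order.trans less_imp_le_nat)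
  qed
qed

lemma has_cycle_detour:
  assumes "walk E xs" "b \<notin> set xs" "hd xs \<noteq> last xs" "E b (hd xs)" "E (last xs) b"
  shows "has_cycle E"
proof -
  obtain ys where ys: "graph_path E ys" "hd ys = hd xs" "last ys = last xs" "set ys \<subseteq> set xs"
    using walk_shorten_to_path[OF assms(1)] .
  have "ys \<noteq> []" using ys(1) by (auto simp: graph_path_def)
  moreover have "length ys \<noteq> 1"
    using ys(2,3) assms(3) by (auto simp: length_Suc_conv)
  ultimately have "3 \<le> length (b # ys)" by (cases "length ys") auto
  moreover have "distinct (b # ys)" "walk E (b # ys)"
    using ys assms(2,4) \<open>ys \<noteq> []\<close> walk_append[of "[b]" ys E] by (auto simp: graph_path_def)
  moreover have "E (last (b # ys)) (hd (b # ys))" using ys(3) assms(5) \<open>ys \<noteq> []\<close> by simp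
  ultimately show ?thesis unfolding has_cycle_def by blast
qed

lemma acyclic_path_unique:
  assumes symmetric: "\<And>u v. E u v \<Longrightarrow> E v u" and acyclic: "\<not> has_cycle E"
    and "graph_path E P" "graph_path E Q" "hd P = hd Q" "last P = last Q"
  shows "P = Q"
  using assms(3-)
proof (induction "length P" arbitrary: P Q rule: less_induct)
  case less
  have "P \<noteq> []" "Q \<noteq> []" using less.prems(1,2) by (auto simp: graph_path_def)
  then obtain P' b Q' c where P: "P = P' @ [b]" and Q: "Q = Q' @ [c]"
    by (metis rev_exhaust)
  have "c = b" using less.prems(4) by (simp add: P Q)
  show ?case
  proof (cases "P' = [] \<or> Q' = []")
    case True
    then show ?thesis
      using less.prems \<open>c = b\<close> by (cases P'; cases Q') (auto simp: P Q graph_path_def)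
  next
    case False
    then have "P' \<noteq> []" "Q' \<noteq> []" by auto
    then have paths: "graph_path E P'" "graph_path E Q'"
      and edges: "E (last P') b" "E (last Q') b"
      using less.prems(1,2) walk_append[of P' "[b]" E] walk_append[of Q' "[b]" E]
      by (auto simp: P Q \<open>c = b\<close> graph_path_def)
    have heads: "hd P' = hd Q'" using less.prems(3) \<open>P' \<noteq> []\<close> \<open>Q' \<noteq> []\<close> by (simp add: P Q)
    show ?thesis
    proof (cases "last P' = last Q'")
      case True
      then show ?thesis using less.hyps[of P' Q'] paths heads \<open>c = b\<close> by (simp add: P Q)
    next
      case False
      define W where "W = rev P' @ tl Q'"
      have "walk E W" "hd W = last P'" "last W = last Q'"
        using walk_rev_join[of E P' Q', OF symmetric] paths heads
        unfolding W_def graph_path_def by auto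
      moreover have "b \<notin> set W"
        using less.prems(1,2) \<open>Q' \<noteq> []\<close> list.set_sel(2)[of Q']
        by (auto simp: P Q \<open>c = b\<close> W_def graph_path_def)
      ultimately show ?thesis
        using has_cycle_detour[of E W b] symmetric acyclic edges False by auto
    qed
  qed
qed

locale rooted_tree =
  fixes E :: "'n::finite \<Rightarrow> 'n \<Rightarrow> bool" and r :: 'n
  assumes tree: "is_tree E"
begin

lemma edge_sym: "E u v \<Longrightarrow> E v u"
  using tree by (simp add: is_tree_def simple_graph_def)

lemma edge_irrefl: "\<not> E v v"
  using tree by (simp add: is_tree_def simple_graph_def)

lemma root_path_ex1: "\<exists>!p. graph_path E p \<and> hd p = r \<and> last p = v"
proof -
  obtain xs where "walk E xs" "hd xs = r" "last xs = v"
    using tree by (auto simp: is_tree_def connected_graph_def)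
  then obtain p where "graph_path E p" "hd p = r" "last p = v"
    using walk_shorten_to_path by metis
  moreover have "P = Q" if "graph_path E P" "graph_path E Q" "hd P = hd Q" "last P = last Q" for P Q
    using acyclic_path_unique[of E P Q] edge_sym tree that by (auto simp: is_tree_def)
  ultimately show ?thesis by metis
qed

definition root_path :: "'n \<Rightarrow> 'n list" where
  "root_path v = (THE p. graph_path E p \<and> hd p = r \<and> last p = v)"

lemma graph_path_root_path: "graph_path E (root_path v)"
  and hd_root_path [simp]: "hd (root_path v) = r"
  and last_root_path [simp]: "last (root_path v) = v"
  using theI'[OF root_path_ex1[of v]] by (simp_all add: root_path_def)

lemma root_path_eqI: "graph_path E p \<Longrightarrow> hd p = r \<Longrightarrow> last p = v \<Longrightarrow> root_path v = p"
  using root_path_ex1[of v] graph_path_root_path[of v] hd_root_path[of v] last_root_path[of v]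
  by blast

lemma root_path_not_Nil [simp]: "root_path v \<noteq> []"
  using graph_path_root_path[of v] by (auto simp: graph_path_def)

lemma distinct_root_path: "distinct (root_path v)"
  and walk_root_path: "walk E (root_path v)"
  using graph_path_root_path[of v] by (auto simp: graph_path_def)

lemma root_path_root [simp]: "root_path r = [r]"
  by (rule root_path_eqI) (auto simp: graph_path_def)

lemma root_path_inj: "root_path v = root_path w \<Longrightarrow> v = w"
  using last_root_path by metis

definition depth :: "'n \<Rightarrow> nat" where
  "depth v = length (root_path v) - 1"

lemma length_root_path: "length (root_path v) = Suc (depth v)"
  by (simp add: depth_def)

lemma depth_eq_0_iff: "depth v = 0 \<longleftrightarrow> v = r"
proof
  assume "depth v = 0"
  then obtain x where "root_path v = [x]" using length_root_path[of v] by (auto simp: length_Suc_conv)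
  then show "v = r" using hd_root_path[of v] last_root_path[of v] by simp
qed (simp add: depth_def)

lemma depth_pos_iff: "0 < depth v \<longleftrightarrow> v \<noteq> r"
  by (simp add: depth_eq_0_iff[symmetric])

lemma root_path_nth_0 [simp]: "root_path v ! 0 = r"
  by (metis hd_conv_nth hd_root_path root_path_not_Nil)

lemma root_path_nth_depth [simp]: "root_path v ! depth v = v"
  by (metis depth_def last_conv_nth last_root_path root_path_not_Nil)

lemma one_less_length_root_path: "1 < length (root_path v) \<longleftrightarrow> v \<noteq> r"
  using depth_eq_0_iff[of v] length_root_path[of v] by linarith

lemma root_path_take:
  assumes "i < length (root_path v)"
  shows "root_path (root_path v ! i) = take (Suc i) (root_path v)"
proof (rule root_path_eqI)
  show "graph_path E (take (Suc i) (root_path v))"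
    using walk_take[OF walk_root_path] distinct_root_path by (simp add: graph_path_def)
  show "hd (take (Suc i) (root_path v)) = r" by simp
  show "last (take (Suc i) (root_path v)) = root_path v ! i"
    using assms by (simp add: take_Suc_conv_app_nth)
qed

lemma root_path_snocI:
  assumes "E v w" "w \<notin> set (root_path v)"
  shows "root_path w = root_path v @ [w]"
proof (rule root_path_eqI)
  show "graph_path E (root_path v @ [w])"
    using assms walk_append[of "root_path v" "[w]" E] walk_root_path distinct_root_path
    by (simp add: graph_path_def)
qed simp_all

lemma root_path_edge:
  assumes "E v w"
  shows "root_path w = root_path v @ [w] \<or> root_path v = root_path w @ [v]"
proof (cases "w \<in> set (root_path v)")
  case False
  then show ?thesis using root_path_snocI[OF assms] by simp
next
  case True
  then obtain i where i: "i < length (root_path v)" "root_path v ! i = w"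
    by (auto simp: in_set_conv_nth)
  have "v \<notin> set (root_path w)"
  proof
    assume "v \<in> set (root_path w)"
    then obtain j where j: "j \<le> i" "root_path v ! j = v"
      using root_path_take[OF i(1)] i(2) by (auto simp: in_set_conv_nth less_Suc_eq_le)
    then have "j = depth v"
      using nth_eq_iff_index_eq[OF distinct_root_path, of j v "depth v"] i(1)
      by (simp add: length_root_path)
    then have "i = depth v" using j(1) i(1) by (simp add: length_root_path)
    then show False using i(2) assms edge_irrefl by simp
  qed
  then show ?thesis using root_path_snocI[OF edge_sym[OF assms]] by simp
qed

definition children :: "'n \<Rightarrow> 'n set" where
  "children v = {w. root_path w = root_path v @ [w]}"

definition parent :: "'n \<Rightarrow> 'n" where
  "parent v = last (butlast (root_path v))"

lemma root_path_parent:
  assumes "v \<noteq> r"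
  shows "root_path v = root_path (parent v) @ [v]"
proof -
  have "depth v \<noteq> 0" using assms depth_eq_0_iff by simp
  then have "root_path (parent v) = butlast (root_path v)"
    using root_path_take[of "depth v - 1" v] last_conv_nth[of "butlast (root_path v)"]
    by (simp add: parent_def length_root_path butlast_conv_take nth_butlast)
  then show ?thesis using append_butlast_last_id[OF root_path_not_Nil, of v] by simp
qed

lemma parent_not_in_children: "v \<noteq> r \<Longrightarrow> parent v \<notin> children v"
  using root_path_parent[of v] by (auto simp: children_def dest: arg_cong[where f = length])

lemma neighbours_eq: "{w. E v w} = children v \<union> (if v = r then {} else {parent v})"
proof (intro equalityI subsetI)
  fix w assume "w \<in> {w. E v w}"
  then consider "root_path w = root_path v @ [w]" | "root_path v = root_path w @ [v]"
    using root_path_edge by blast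
  then show "w \<in> children v \<union> (if v = r then {} else {parent v})"
  proof cases
    case 2
    then have "v \<noteq> r" by (cases "root_path w") auto
    then have "root_path w = root_path (parent v)" using 2 root_path_parent by simp
    then show ?thesis using \<open>v \<noteq> r\<close> root_path_inj by simp
  qed (simp add: children_def)
next
  have edge: "E v w" if "root_path w = root_path v @ [w]" for v w
    using that walk_root_path[of w] walk_append[of "root_path v" "[w]" E] by simp
  fix w assume "w \<in> children v \<union> (if v = r then {} else {parent v})"
  then show "w \<in> {w. E v w}"
    using edge[of w v] edge[of v "parent v"] root_path_parent[of v] edge_sym
    by (auto simp: children_def split: if_splits)
qed

lemma degree_eq: "degree E v = card (children v) + (if v = r then 0 else 1)"
  using parent_not_in_children[of v] by (cases "v = r") (simp_all add: degree_def neighbours_eq)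

lemma pendant_iff_children_empty: "v \<noteq> r \<Longrightarrow> pendant E v \<longleftrightarrow> children v = {}"
  by (simp add: pendant_def degree_eq)

lemma gdist_eq_depth: "gdist E v r = depth v"
proof -
  let ?walk_len = "\<lambda>n. \<exists>xs. walk E xs \<and> hd xs = v \<and> last xs = r \<and> length xs = Suc n"
  have "?walk_len (depth v)"
    using walk_rev[OF edge_sym walk_root_path[of v]]
    by (intro exI[of _ "rev (root_path v)"]) (simp add: hd_rev last_rev length_root_path)
  then have le: "gdist E v r \<le> depth v" and "?walk_len (gdist E v r)"
    unfolding gdist_def by (auto intro: Least_le LeastI)
  then obtain xs where xs: "walk E xs" "hd xs = v" "last xs = r" "length xs = Suc (gdist E v r)"
    by blast
  then obtain ys where ys: "graph_path E ys" "hd ys = v" "last ys = r" "length ys \<le> length xs"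
    using walk_shorten_to_path by metis
  then have "graph_path E (rev ys)" using walk_rev[of E ys] edge_sym by (simp add: graph_path_def)
  then have "root_path v = rev ys"
    using ys by (intro root_path_eqI) (auto simp: hd_rev last_rev graph_path_def)
  then show ?thesis using le ys(4) xs(4) length_root_path[of v] by simp
qed

lemma ex_leaf_below: "\<exists>y. prefix (root_path v) (root_path y) \<and> children y = {}"
proof -
  let ?S = "{y. prefix (root_path v) (root_path y)}"
  have "finite ?S" "?S \<noteq> {}" by auto
  then obtain y where y: "y \<in> ?S" "Max (depth ` ?S) = depth y"
    using obtains_MAX[of ?S depth] by blast
  have "children y = {}"
  proof (rule ccontr)
    assume "children y \<noteq> {}"
    then obtain c where c: "root_path c = root_path y @ [c]" by (auto simp: children_def)
    then have "c \<in> ?S" using y(1) by (simp add: prefix_prefix)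
    then have "depth c \<le> depth y" using y(2) by (metis Max_ge finite finite_imageI imageI)
    then show False using c length_root_path[of c] length_root_path[of y] by simp
  qed
  then show ?thesis using y by blast
qed

definition leaf_below :: "'n \<Rightarrow> 'n" where
  "leaf_below v = (SOME y. prefix (root_path v) (root_path y) \<and> children y = {})"

lemma prefix_root_path_leaf_below: "prefix (root_path v) (root_path (leaf_below v))"
  and children_leaf_below: "children (leaf_below v) = {}"
  using someI_ex[OF ex_leaf_below[of v]] by (simp_all add: leaf_below_def)

lemma pendant_leaf_below:
  assumes "v \<noteq> r"
  shows "pendant E (leaf_below v)"
proof -
  have "leaf_below v \<noteq> r"
    using prefix_root_path_leaf_below[of v] assms root_path_inj[of v r]
    by (auto simp: prefix_Cons)
  then show ?thesis using pendant_iff_children_empty children_leaf_below by simp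
qed

lemma inj_on_leaf_below:
  assumes "pairwise (\<lambda>a b. root_path a \<parallel> root_path b) A"
  shows "inj_on leaf_below A"
proof (rule inj_onI, rule ccontr)
  fix a b assume "a \<in> A" "b \<in> A" "leaf_below a = leaf_below b" "a \<noteq> b"
  then show False
    using assms prefix_same_cases[OF prefix_root_path_leaf_below[of a]]
      prefix_root_path_leaf_below[of b] by (auto simp: pairwise_def parallel_def)
qed

lemma card_le_pendants:
  assumes "r \<notin> A" "pairwise (\<lambda>a b. root_path a \<parallel> root_path b) A"
  shows "card A \<le> card {v. pendant E v}"
proof (rule card_inj_on_le)
  show "inj_on leaf_below A" using inj_on_leaf_below[OF assms(2)] .
  show "leaf_below ` A \<subseteq> {v. pendant E v}" using assms(1) pendant_leaf_below by force
qed simp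

definition branch :: "'n \<Rightarrow> 'n" where
  "branch v = root_path v ! 1"

lemma branch_in_children_root:
  assumes "v \<noteq> r"
  shows "branch v \<in> children r"
proof -
  have "1 < length (root_path v)" using assms one_less_length_root_path by simp
  then have "root_path (branch v) = take 2 (root_path v)"
    using root_path_take[of 1 v] by (simp add: branch_def numeral_2_eq_2)
  also have "\<dots> = [r, branch v]"
    using \<open>1 < length (root_path v)\<close> hd_root_path[of v]
    by (cases "root_path v" rule: list.exhaust; cases "tl (root_path v)") (auto simp: branch_def)
  finally show ?thesis by (simp add: children_def)
qed

lemma branch_children_root: "w \<in> children r \<Longrightarrow> branch w = w"
  by (simp add: children_def branch_def)

lemma branch_eq_if_prefix:
  assumes "prefix (root_path v) (root_path w)" "v \<noteq> r"
  shows "branch w = branch v"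
proof -
  have "1 < length (root_path v)" using assms(2) one_less_length_root_path by simp
  then show ?thesis using assms(1) by (auto simp: branch_def prefix_def nth_append)
qed

lemma parallel_if_branch_ne:
  "v \<noteq> r \<Longrightarrow> w \<noteq> r \<Longrightarrow> branch v \<noteq> branch w \<Longrightarrow> root_path v \<parallel> root_path w"
  using branch_eq_if_prefix by (metis parallelI)

lemma parallel_if_depth_eq: "depth v = depth w \<Longrightarrow> v \<noteq> w \<Longrightarrow> root_path v \<parallel> root_path w"
  using not_equal_is_parallel root_path_inj length_root_path by metis

end

locale spider = rooted_tree E r for E :: "'n::finite \<Rightarrow> 'n \<Rightarrow> bool" and r :: 'n +
  assumes three_pendants: "card {v. pendant E v} = 3" and major_root: "major E r"
begin

lemma children_root_ne_root: "w \<in> children r \<Longrightarrow> w \<noteq> r"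
  by (auto simp: children_def)

lemma depth_children_root: "w \<in> children r \<Longrightarrow> depth w = 1"
  by (simp add: children_def depth_def)

lemma pairwise_parallel_children_root: "pairwise (\<lambda>a b. root_path a \<parallel> root_path b) (children r)"
  using parallel_if_depth_eq depth_children_root by (simp add: pairwise_def)

lemma card_children_root: "card (children r) = 3"
proof -
  have "card (children r) \<le> 3"
    using card_le_pendants[OF _ pairwise_parallel_children_root] children_root_ne_root three_pendants
    by auto
  moreover have "3 \<le> card (children r)" using major_root by (simp add: major_def degree_eq)
  ultimately show ?thesis by simp
qed

text \<open>Otherwise the two children of \<open>v\<close> and the two other children of the root
  would be four pairwise incomparable vertices, which have four distinct leaves below them.\<close>
lemma children_subsingleton:
  assumes "v \<noteq> r" "c1 \<in> children v" "c2 \<in> children v"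
  shows "c1 = c2"
proof (rule ccontr)
  assume "c1 \<noteq> c2"
  define S where "S = {c1, c2} \<union> (children r - {branch v})"
  have c_prefix: "prefix (root_path v) (root_path c)" and c_depth: "depth c = Suc (depth v)"
    if "c \<in> {c1, c2}" for c
    using that assms(2,3) by (auto simp: children_def depth_def)
  have "depth v \<noteq> 0" using assms(1) depth_eq_0_iff by simp
  then have c_not_child: "c \<notin> children r" if "c \<in> {c1, c2}" for c
    using c_depth[OF that] depth_children_root by force
  have "card S = card {c1, c2} + card (children r - {branch v})"
    unfolding S_def using c_not_child by (intro card_Un_disjoint) auto
  also have "\<dots> = 4"
    using \<open>c1 \<noteq> c2\<close> card_children_root branch_in_children_root[OF assms(1)] by simp
  finally have "card S = 4" .
  moreover have "card S \<le> 3"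
  proof -
    have "c \<noteq> r" if "c \<in> S" for c
      using that c_depth[of c] children_root_ne_root[of c] depth_eq_0_iff[of c]
      by (auto simp: S_def)
    moreover have "branch c = branch v" if "c \<in> {c1, c2}" for c
      using branch_eq_if_prefix[OF c_prefix[OF that] assms(1)] .
    ultimately have "pairwise (\<lambda>a b. root_path a \<parallel> root_path b) S"
      using parallel_if_depth_eq[of c1 c2] c_depth \<open>c1 \<noteq> c2\<close> pairwise_parallel_children_root
        parallel_if_branch_ne branch_children_root parallel_commute
      unfolding S_def pairwise_def by (smt (verit) DiffE Un_iff insert_iff singletonD)
    then show ?thesis
      using card_le_pendants[of S] three_pendants \<open>\<And>c. c \<in> S \<Longrightarrow> c \<noteq> r\<close> by auto
  qed
  ultimately show False by simp
qed

lemma bij_betw_leaf_below_children_root: "bij_betw leaf_below (children r) {v. pendant E v}"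
proof -
  have inj: "inj_on leaf_below (children r)"
    using inj_on_leaf_below[OF pairwise_parallel_children_root] .
  moreover have "leaf_below ` children r \<subseteq> {v. pendant E v}"
    using pendant_leaf_below children_root_ne_root by blast
  moreover have "card (leaf_below ` children r) = card {v. pendant E v}"
    using card_image[OF inj] card_children_root three_pendants by simp
  ultimately show ?thesis by (simp add: bij_betw_def card_subset_eq)
qed

lemma pendant_ne_root: "pendant E y \<Longrightarrow> y \<noteq> r"
  using major_root by (auto simp: pendant_def major_def)

lemma branch_leaf_below: "w \<in> children r \<Longrightarrow> branch (leaf_below w) = w"
  using branch_eq_if_prefix[OF prefix_root_path_leaf_below children_root_ne_root]
    branch_children_root by simp

lemma leaf_below_branch:
  assumes "pendant E y"
  shows "leaf_below (branch y) = y"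
proof -
  obtain w where "w \<in> children r" "y = leaf_below w"
    using assms bij_betw_leaf_below_children_root by (auto simp: bij_betw_def)
  then show ?thesis using branch_leaf_below by simp
qed

lemma inj_on_branch_pendants: "inj_on branch {v. pendant E v}"
  using leaf_below_branch by (metis inj_onI mem_Collect_eq)

lemma children_root_eq: "children r = branch ` {v. pendant E v}"
proof (intro equalityI subsetI)
  fix w assume "w \<in> children r"
  then have "w = branch (leaf_below w)" "pendant E (leaf_below w)"
    using branch_leaf_below pendant_leaf_below children_root_ne_root by auto
  then show "w \<in> branch ` {v. pendant E v}" by blast
next
  fix w assume "w \<in> branch ` {v. pendant E v}"
  then show "w \<in> children r" using branch_in_children_root pendant_ne_root by auto
qed

definition leg :: "'n \<Rightarrow> nat \<Rightarrow> 'n" where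
  "leg y h = root_path y ! (depth y - h)"

lemma leg_0 [simp]: "leg y 0 = y"
  by (simp add: leg_def)

lemma leg_depth [simp]: "leg y (depth y) = r"
  by (simp add: leg_def)

lemma root_path_leg: "h \<le> depth y \<Longrightarrow> root_path (leg y h) = take (Suc (depth y - h)) (root_path y)"
  using root_path_take[of "depth y - h" y] by (simp add: leg_def length_root_path)

lemma depth_leg: "h \<le> depth y \<Longrightarrow> depth (leg y h) = depth y - h"
  using root_path_leg[of h y] length_root_path[of y] length_root_path[of "leg y h"] by simp

lemma leg_ne_root: "h < depth y \<Longrightarrow> leg y h \<noteq> r"
  using depth_leg[of h y] depth_eq_0_iff by fastforce

lemma root_path_leg_Suc:
  assumes "h < depth y"
  shows "root_path (leg y h) = root_path (leg y (Suc h)) @ [leg y h]"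
proof -
  have "depth y - h = Suc (depth y - Suc h)" using assms by simp
  then show ?thesis
    using assms root_path_leg[of h y] root_path_leg[of "Suc h" y] length_root_path[of y]
    by (simp add: take_Suc_conv_app_nth leg_def)
qed

lemma parent_leg:
  assumes "h < depth y"
  shows "parent (leg y h) = leg y (Suc h)"
proof (rule root_path_inj)
  show "root_path (parent (leg y h)) = root_path (leg y (Suc h))"
    using root_path_parent[OF leg_ne_root[OF assms]] root_path_leg_Suc[OF assms] by simp
qed

lemma children_leg:
  assumes "pendant E y" "0 < h" "h < depth y"
  shows "children (leg y h) = {leg y (h - 1)}"
proof -
  have "leg y (h - 1) \<in> children (leg y h)"
    using root_path_leg_Suc[of "h - 1" y] assms(2,3) by (simp add: children_def)
  then show ?thesis using children_subsingleton[OF leg_ne_root[OF assms(3)]] by blast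
qed

lemma leg_eq_imp_eq: "leg y h = leg y h' \<Longrightarrow> h \<le> depth y \<Longrightarrow> h' \<le> depth y \<Longrightarrow> h = h'"
  using depth_leg[of h y] depth_leg[of h' y] by simp

lemma neighbours_leg:
  assumes "pendant E y" "0 < h" "h < depth y"
  shows "{w. E (leg y h) w} = {leg y (h - 1), leg y (Suc h)}"
  using children_leg[OF assms] parent_leg[OF assms(3)] leg_ne_root[OF assms(3)]
  by (simp add: neighbours_eq insert_commute)

lemma neighbours_pendant:
  assumes "pendant E y"
  shows "{w. E y w} = {leg y 1}"
proof -
  have "y \<noteq> r" using pendant_ne_root[OF assms] .
  then have "children y = {}" "0 < depth y"
    using assms pendant_iff_children_empty depth_eq_0_iff by auto
  then show ?thesis using parent_leg[of 0 y] \<open>y \<noteq> r\<close> by (simp add: neighbours_eq)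
qed

lemma neighbours_root: "{w. E r w} = branch ` {v. pendant E v}"
  by (simp add: neighbours_eq children_root_eq)

lemma branch_eq_leg:
  assumes "pendant E y"
  shows "branch y = leg y (depth y - 1)"
proof -
  have "depth y \<noteq> 0" using pendant_ne_root[OF assms] depth_eq_0_iff by simp
  then show ?thesis by (simp add: branch_def leg_def)
qed

lemma obtain_leg:
  assumes "v \<noteq> r"
  obtains y h where "pendant E y" "h < depth y" "v = leg y h"
proof
  define y where "y = leaf_below v"
  have pre: "prefix (root_path v) (root_path y)" using prefix_root_path_leaf_below by (simp add: y_def)
  then have le: "depth v \<le> depth y"
    using prefix_length_le[OF pre] length_root_path[of v] length_root_path[of y] by simp
  show "pendant E y" using pendant_leaf_below[OF assms] by (simp add: y_def)
  show "depth y - depth v < depth y" using le assms depth_eq_0_iff[of v] by simp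
  have "root_path y ! depth v = root_path v ! depth v"
    using pre length_root_path[of v] by (auto simp: prefix_def nth_append)
  then show "v = leg y (depth y - depth v)" using le by (simp add: leg_def)
qed

lemma leaf_below_leg:
  assumes "pendant E y" "h < depth y"
  shows "leaf_below (leg y h) = y"
proof -
  have v: "leg y h \<noteq> r" using leg_ne_root[OF assms(2)] .
  have "prefix (root_path (leg y h)) (root_path y)"
    using root_path_leg[of h y] assms(2) by (simp add: take_is_prefix)
  then have "branch y = branch (leg y h)" using branch_eq_if_prefix v by blast
  also have "\<dots> = branch (leaf_below (leg y h))"
    using branch_eq_if_prefix[OF prefix_root_path_leaf_below v] by simp
  finally show ?thesis
    using inj_on_branch_pendants pendant_leaf_below[OF v] assms(1) by (simp add: inj_on_def)
qed

end

fun leg_coeff :: "nat \<Rightarrow> real" where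
  "leg_coeff 0 = 1"
| "leg_coeff (Suc 0) = 0"
| "leg_coeff (Suc (Suc n)) = leg_coeff (Suc n) - leg_coeff n"

lemma leg_coeff_add_3: "leg_coeff (n + 3) = - leg_coeff n"
  by (simp add: numeral_3_eq_3)

lemma leg_coeff_mult_3_add: "leg_coeff (3 * k + j) = (-1) ^ k * leg_coeff j"
proof (induction k)
  case (Suc k)
  then show ?case using leg_coeff_add_3[of "3 * k + j"] by (simp add: add.commute add.left_commute)
qed simp

lemma leg_coeff_eq_0_iff: "leg_coeff n = 0 \<longleftrightarrow> n mod 3 = 1"
proof -
  have "leg_coeff n = (-1) ^ (n div 3) * leg_coeff (n mod 3)"
    using leg_coeff_mult_3_add[of "n div 3" "n mod 3"] by simp
  moreover have "n mod 3 = 0 \<or> n mod 3 = 1 \<or> n mod 3 = 2" by linarith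
  ultimately show ?thesis by (auto simp: numeral_2_eq_2)
qed

lemma leg_coeff_pred_eq_0_iff: "0 < n \<Longrightarrow> leg_coeff (n - 1) = 0 \<longleftrightarrow> n mod 3 = 2"
  by (cases n) (auto simp: leg_coeff_eq_0_iff mod_Suc)

lemma leg_coeff_pred_eq:
  assumes "n mod 3 = 0" "0 < n"
  shows "leg_coeff (n - 1) = leg_coeff n"
proof -
  define k where "k = n div 3 - 1"
  have k: "n = 3 * Suc k" using assms by (auto simp: k_def)
  then have "n - 1 = 3 * k + 2" by simp
  then show ?thesis
    using k leg_coeff_mult_3_add[of k 2] leg_coeff_mult_3_add[of "Suc k" 0] by (simp add: numeral_2_eq_2)
qed

text \<open>On a spider whose legs end in the leaves \<open>y \<in> P\<close> and have lengths \<open>a y\<close>, an eigenvector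
  for the eigenvalue 1 is \<open>t y * leg_coeff h\<close> at distance \<open>h\<close> from the leaf \<open>y\<close>.  The system says
  that the legs meet in a common value \<open>X\<close> at the centre and that the eigenvalue equation holds there.\<close>
definition leg_system_solvable :: "'a set \<Rightarrow> ('a \<Rightarrow> nat) \<Rightarrow> bool" where
  "leg_system_solvable P a \<longleftrightarrow>
    (\<exists>X t. (\<forall>y\<in>P. X = t y * leg_coeff (a y)) \<and> 2 * X = (\<Sum>y\<in>P. t y * leg_coeff (a y - 1)) \<and>
      (X \<noteq> 0 \<or> (\<exists>y\<in>P. t y \<noteq> 0)))"

lemma leg_system_solvable_if_two_legs_1_mod_3:
  assumes "u1 \<in> P" "u2 \<in> P" "u1 \<noteq> u2" "a u1 mod 3 = 1" "a u2 mod 3 = 1" "finite P"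
  shows "leg_system_solvable P a"
proof -
  define t where "t y = (if y = u1 then 1 / leg_coeff (a y - 1)
    else if y = u2 then - 1 / leg_coeff (a y - 1) else 0)" for y
  have nonzero: "leg_coeff (a u - 1) \<noteq> 0" if "a u mod 3 = 1" for u
    using that leg_coeff_pred_eq_0_iff[of "a u"] by (cases "a u") auto
  have "t y * leg_coeff (a y - 1) = (if y = u1 then 1 else 0) - (if y = u2 then 1 else 0)" for y
    using nonzero assms(3-5) by (simp add: t_def)
  then have "(\<Sum>y\<in>P. t y * leg_coeff (a y - 1)) = 0"
    using assms(1,2,6) by (simp add: sum_subtractf)
  moreover have "t y * leg_coeff (a y) = 0" for y
    using assms(4,5) by (simp add: t_def leg_coeff_eq_0_iff)
  moreover have "t u1 \<noteq> 0" using nonzero assms(4) by (simp add: t_def)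
  ultimately show ?thesis using assms(1) unfolding leg_system_solvable_def by (metis mult_zero_right)
qed

lemma leg_system_solvable_if_legs_2_0_0_mod_3:
  assumes "P = {u1, u2, u3}" "u1 \<noteq> u2" "u1 \<noteq> u3" "u2 \<noteq> u3"
    "a u1 mod 3 = 2" "a u2 mod 3 = 0" "a u3 mod 3 = 0" "\<forall>y\<in>P. 0 < a y"
  shows "leg_system_solvable P a"
proof -
  define t where "t y = 1 / leg_coeff (a y)" for y
  have "leg_coeff (a y) \<noteq> 0" if "y \<in> P" for y
    using that assms(1,5-7) by (auto simp: leg_coeff_eq_0_iff)
  then have "\<forall>y\<in>P. 1 = t y * leg_coeff (a y)" by (simp add: t_def)
  moreover have "t u1 * leg_coeff (a u1 - 1) = 0"
    using assms(5,8) leg_coeff_pred_eq_0_iff[of "a u1"] assms(1) by simp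
  moreover have "t u * leg_coeff (a u - 1) = 1" if "u \<in> {u2, u3}" for u
    using that assms leg_coeff_pred_eq[of "a u"] \<open>\<And>y. y \<in> P \<Longrightarrow> leg_coeff (a y) \<noteq> 0\<close>
    by (auto simp: t_def)
  ultimately show ?thesis
    using assms(1-4) unfolding leg_system_solvable_def by (intro exI[of _ 1] exI[of _ t]) simp
qed

lemma two_legs_1_mod_3_if_centre_0:
  assumes "finite P" "\<forall>y\<in>P. 0 < a y" "\<forall>y\<in>P. t y * leg_coeff (a y) = 0"
    and centre: "(\<Sum>y\<in>P. t y * leg_coeff (a y - 1)) = 0" and "u1 \<in> P" "t u1 \<noteq> 0"
  shows "\<exists>u1 u2. u1 \<in> P \<and> u2 \<in> P \<and> u1 \<noteq> u2 \<and> a u1 mod 3 = 1 \<and> a u2 mod 3 = 1"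
proof -
  have "a u1 mod 3 = 1" using assms(3,5,6) by (auto simp: leg_coeff_eq_0_iff)
  have "\<exists>u2\<in>P - {u1}. a u2 mod 3 = 1"
  proof (rule ccontr)
    assume "\<not> ?thesis"
    then have "t y = 0" if "y \<in> P - {u1}" for y
      using that assms(3) by (auto simp: leg_coeff_eq_0_iff)
    then have "(\<Sum>y\<in>P - {u1}. t y * leg_coeff (a y - 1)) = 0" by simp
    then have "t u1 * leg_coeff (a u1 - 1) = 0"
      using sum.remove[OF assms(1,5), of "\<lambda>y. t y * leg_coeff (a y - 1)"] centre by simp
    moreover have "leg_coeff (a u1 - 1) \<noteq> 0"
      using leg_coeff_pred_eq_0_iff[of "a u1"] assms(2,5) \<open>a u1 mod 3 = 1\<close> by simp
    ultimately show False using assms(6) by simp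
  qed
  then show ?thesis using assms(5) \<open>a u1 mod 3 = 1\<close> by blast
qed

lemma legs_2_0_0_mod_3_if_centre_ne_0:
  assumes "card P = 3" "\<forall>y\<in>P. 0 < a y" "\<forall>y\<in>P. X = t y * leg_coeff (a y)"
    and centre: "2 * X = (\<Sum>y\<in>P. t y * leg_coeff (a y - 1))" and "X \<noteq> 0"
  shows "\<exists>u1 u2 u3. u1 \<in> P \<and> u2 \<in> P \<and> u3 \<in> P \<and> u1 \<noteq> u2 \<and> u1 \<noteq> u3 \<and> u2 \<noteq> u3 \<and>
    a u1 mod 3 = 2 \<and> a u2 mod 3 = 0 \<and> a u3 mod 3 = 0"
proof -
  have "finite P" using assms(1) by (simp add: card_ge_0_finite)
  have not_1: "a y mod 3 \<noteq> 1" if "y \<in> P" for y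
    using assms(3,5) that by (auto simp: leg_coeff_eq_0_iff)
  define Z where "Z = {y \<in> P. a y mod 3 = 0}"
  have "t y * leg_coeff (a y - 1) = (if y \<in> Z then X else 0)" if "y \<in> P" for y
  proof (cases "a y mod 3 = 0")
    case True
    then show ?thesis
      using that assms(3) leg_coeff_pred_eq[OF True] assms(2) by (simp add: Z_def)
  next
    case False
    then have "a y mod 3 = 2" using not_1[OF that] by linarith
    then show ?thesis
      using that leg_coeff_pred_eq_0_iff[of "a y"] assms(2) by (simp add: Z_def)
  qed
  then have "(\<Sum>y\<in>P. t y * leg_coeff (a y - 1)) = (\<Sum>y\<in>P. if y \<in> Z then X else 0)"
    by (rule sum.cong[OF refl])
  also have "\<dots> = (\<Sum>y\<in>P \<inter> Z. X)" by (simp only: sum.inter_restrict[OF \<open>finite P\<close>])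
  also have "\<dots> = real (card Z) * X" by (simp add: Z_def Int_absorb1)
  finally have "card Z = 2" using centre assms(5) by simp
  then obtain u2 u3 where Z: "Z = {u2, u3}" "u2 \<noteq> u3" unfolding card_2_iff by blast
  have "Z \<subseteq> P" by (auto simp: Z_def)
  moreover have "Z \<noteq> P" using assms(1) \<open>card Z = 2\<close> by (intro notI) simp
  ultimately obtain u1 where u1: "u1 \<in> P" "u1 \<notin> Z" by blast
  then have "a u1 mod 3 = 2" using not_1[OF u1(1)] by (simp add: Z_def)
  moreover have "u2 \<in> Z" "u3 \<in> Z" using Z(1) by simp_all
  then have "u2 \<in> P" "u3 \<in> P" "a u2 mod 3 = 0" "a u3 mod 3 = 0" by (simp_all add: Z_def)
  moreover have "u1 \<noteq> u2" "u1 \<noteq> u3" using u1(2) Z(1) by auto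
  ultimately show ?thesis using u1(1) Z(2) by (intro exI[of _ u1] exI[of _ u2] exI[of _ u3]) simp
qed

lemma leg_system_solvable_iff:
  assumes "card P = 3" "\<forall>y\<in>P. 0 < a y"
  shows "leg_system_solvable P a \<longleftrightarrow>
    (\<exists>u1 u2. u1 \<in> P \<and> u2 \<in> P \<and> u1 \<noteq> u2 \<and> a u1 mod 3 = 1 \<and> a u2 mod 3 = 1) \<or>
    (\<exists>u1 u2 u3. u1 \<in> P \<and> u2 \<in> P \<and> u3 \<in> P \<and> u1 \<noteq> u2 \<and> u1 \<noteq> u3 \<and> u2 \<noteq> u3 \<and>
      a u1 mod 3 = 2 \<and> a u2 mod 3 = 0 \<and> a u3 mod 3 = 0)"
    (is "_ \<longleftrightarrow> ?two_legs_1 \<or> ?one_leg_2")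
proof
  have "finite P" using assms(1) by (simp add: card_ge_0_finite)
  assume "leg_system_solvable P a"
  then obtain X t where top: "\<forall>y\<in>P. X = t y * leg_coeff (a y)"
    and centre: "2 * X = (\<Sum>y\<in>P. t y * leg_coeff (a y - 1))"
    and nontrivial: "X \<noteq> 0 \<or> (\<exists>y\<in>P. t y \<noteq> 0)"
    unfolding leg_system_solvable_def by blast
  show "?two_legs_1 \<or> ?one_leg_2"
  proof (cases "X = 0")
    case True
    then obtain u1 where "u1 \<in> P" "t u1 \<noteq> 0" using nontrivial by blast
    then show ?thesis
      using two_legs_1_mod_3_if_centre_0[OF \<open>finite P\<close> assms(2)] top centre True by simp
  next
    case False
    then show ?thesis using legs_2_0_0_mod_3_if_centre_ne_0[OF assms top centre] by simp
  qed
next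
  have "finite P" using assms(1) by (simp add: card_ge_0_finite)
  assume "?two_legs_1 \<or> ?one_leg_2"
  then show "leg_system_solvable P a"
  proof (elim disjE exE conjE)
    fix u1 u2 assume "u1 \<in> P" "u2 \<in> P" "u1 \<noteq> u2" "a u1 mod 3 = 1" "a u2 mod 3 = 1"
    then show ?thesis using leg_system_solvable_if_two_legs_1_mod_3[of u1 P u2 a] \<open>finite P\<close> by simp
  next
    fix u1 u2 u3 assume u: "u1 \<in> P" "u2 \<in> P" "u3 \<in> P" "u1 \<noteq> u2" "u1 \<noteq> u3" "u2 \<noteq> u3"
      and "a u1 mod 3 = 2" "a u2 mod 3 = 0" "a u3 mod 3 = 0"
    moreover have "P = {u1, u2, u3}"
      using u assms(1) \<open>finite P\<close> by (intro card_seteq[symmetric]) auto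
    ultimately show ?thesis using leg_system_solvable_if_legs_2_0_0_mod_3[of P u1 u2 u3 a] assms(2) by simp
  qed
qed

lemma laplacian_mult_vec_nth:
  "(laplacian E *v x) $ v = real (degree E v) * x $ v - (\<Sum>w | E v w. x $ w)"
proof -
  have "(laplacian E *v x) $ v =
      (\<Sum>w\<in>UNIV. ((if v = w then real (degree E v) else 0) - (if E v w then 1 else 0)) * x $ w)"
    by (simp add: laplacian_def matrix_vector_mult_def)
  also have "\<dots> = (\<Sum>w\<in>UNIV. if v = w then real (degree E v) * x $ w else 0)
      - (\<Sum>w\<in>UNIV. if E v w then x $ w else 0)"
    unfolding sum_subtractf[symmetric] by (rule sum.cong) (auto simp: algebra_simps)
  also have "\<dots> = real (degree E v) * x $ v - (\<Sum>w | E v w. x $ w)"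
    by (simp add: sum.inter_filter[symmetric])
  finally show ?thesis .
qed

context spider
begin

lemma laplacian_mult_vec_root:
  "(laplacian E *v x) $ r = 3 * x $ r - (\<Sum>y | pendant E y. x $ branch y)"
proof -
  have "degree E r = 3"
    using card_image[OF inj_on_branch_pendants] three_pendants
    by (simp add: degree_def neighbours_root)
  then show ?thesis
    using sum.reindex[OF inj_on_branch_pendants, of "\<lambda>w. x $ w"]
    by (simp add: laplacian_mult_vec_nth neighbours_root)
qed

lemma laplacian_mult_vec_pendant:
  "pendant E y \<Longrightarrow> (laplacian E *v x) $ y = x $ y - x $ leg y 1"
  by (simp add: laplacian_mult_vec_nth neighbours_pendant degree_def)

lemma laplacian_mult_vec_leg:
  assumes "pendant E y" "0 < h" "h < depth y"
  shows "(laplacian E *v x) $ leg y h = 2 * x $ leg y h - x $ leg y (h - 1) - x $ leg y (Suc h)"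
proof -
  have "leg y (h - 1) \<noteq> leg y (Suc h)"
  proof
    assume "leg y (h - 1) = leg y (Suc h)"
    then have "h - 1 = Suc h" using leg_eq_imp_eq assms(3) by simp
    then show False by simp
  qed
  then show ?thesis
    using assms by (simp add: laplacian_mult_vec_nth neighbours_leg degree_def)
qed

lemma eigenvector_on_leg:
  assumes "laplacian E *v x = x" "pendant E y" "h \<le> depth y"
  shows "x $ leg y h = x $ y * leg_coeff h"
  using assms(3)
proof (induction h rule: leg_coeff.induct)
  case 2
  show ?case using laplacian_mult_vec_pendant[OF assms(2), of x] assms(1) by simp
next
  case (3 n)
  have "2 * x $ leg y (Suc n) - x $ leg y n - x $ leg y (Suc (Suc n)) = x $ leg y (Suc n)"
    using laplacian_mult_vec_leg[OF assms(2), of "Suc n" x] "3.prems" assms(1) by simp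
  then show ?case using 3 by (simp add: algebra_simps)
qed simp

lemma eigenvector_at_root:
  assumes "laplacian E *v x = x"
  shows "2 * x $ r = (\<Sum>y | pendant E y. x $ y * leg_coeff (depth y - 1))"
proof -
  have "x $ branch y = x $ y * leg_coeff (depth y - 1)" if "pendant E y" for y
    using branch_eq_leg[OF that] eigenvector_on_leg[OF assms that, of "depth y - 1"] by simp
  then show ?thesis using laplacian_mult_vec_root[of x] assms by simp
qed

lemma eigenvector_eq_0I:
  assumes "laplacian E *v x = x" "x $ r = 0" "\<And>y. pendant E y \<Longrightarrow> x $ y = 0"
  shows "x = 0"
  unfolding vec_eq_iff
proof
  fix v
  show "x $ v = 0 $ v"
  proof (cases "v = r")
    case False
    then obtain y h where "pendant E y" "h < depth y" "v = leg y h" by (rule obtain_leg)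
    then show ?thesis using eigenvector_on_leg[OF assms(1)] assms(3) by simp
  qed (simp add: assms(2))
qed

definition spider_vector :: "real \<Rightarrow> ('n \<Rightarrow> real) \<Rightarrow> real^'n" where
  "spider_vector X t = (\<chi> v. if v = r then X
    else t (leaf_below v) * leg_coeff (depth (leaf_below v) - depth v))"

lemma spider_vector_leg:
  assumes "pendant E y" "h \<le> depth y" "X = t y * leg_coeff (depth y)"
  shows "spider_vector X t $ leg y h = t y * leg_coeff h"
proof (cases "h = depth y")
  case False
  then have "h < depth y" using assms(2) by simp
  then show ?thesis
    using leg_ne_root leaf_below_leg[OF assms(1)] depth_leg by (simp add: spider_vector_def)
qed (simp add: spider_vector_def assms(3))

lemma laplacian_spider_vector:
  assumes top: "\<forall>y. pendant E y \<longrightarrow> X = t y * leg_coeff (depth y)"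
    and centre: "2 * X = (\<Sum>y | pendant E y. t y * leg_coeff (depth y - 1))"
  shows "laplacian E *v spider_vector X t = spider_vector X t"
  unfolding vec_eq_iff
proof
  let ?x = "spider_vector X t"
  have val: "?x $ leg y h = t y * leg_coeff h" if "pendant E y" "h \<le> depth y" for y h
    using spider_vector_leg that top by blast
  fix v
  show "(laplacian E *v ?x) $ v = ?x $ v"
  proof (cases "v = r")
    case True
    have "?x $ branch y = t y * leg_coeff (depth y - 1)" if "pendant E y" for y
      using branch_eq_leg[OF that] val[OF that, of "depth y - 1"] by simp
    then show ?thesis using True laplacian_mult_vec_root[of ?x] centre by (simp add: spider_vector_def)
  next
    case False
    then obtain y h where y: "pendant E y" "v = leg y h" "h < depth y" by (rule obtain_leg)
    show ?thesis
    proof (cases "h = 0")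
      case True
      then show ?thesis
        using y laplacian_mult_vec_pendant[OF y(1), of ?x] val[OF y(1), of 1] by simp
    next
      case False
      then have "leg_coeff (Suc h) = leg_coeff h - leg_coeff (h - 1)" by (cases h) simp_all
      moreover have "(laplacian E *v ?x) $ v =
          2 * (t y * leg_coeff h) - t y * leg_coeff (h - 1) - t y * leg_coeff (Suc h)"
        using y False laplacian_mult_vec_leg[OF y(1), of h ?x] val[OF y(1)] by simp
      ultimately show ?thesis using y val[OF y(1), of h] by (simp add: right_diff_distrib)
    qed
  qed
qed

lemma eigenvalue_one_iff_leg_system_solvable:
  "is_eigenvalue (laplacian E) 1 \<longleftrightarrow> leg_system_solvable {y. pendant E y} depth"
proof
  assume "is_eigenvalue (laplacian E) 1"
  then obtain x where "x \<noteq> 0" and x: "laplacian E *v x = x"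
    by (auto simp: is_eigenvalue_def)
  then have "x $ r \<noteq> 0 \<or> (\<exists>y\<in>{y. pendant E y}. x $ y \<noteq> 0)"
    using eigenvector_eq_0I by auto
  moreover have "x $ r = x $ y * leg_coeff (depth y)" if "pendant E y" for y
    using eigenvector_on_leg[OF x that, of "depth y"] by simp
  ultimately show "leg_system_solvable {y. pendant E y} depth"
    unfolding leg_system_solvable_def using eigenvector_at_root[OF x] by blast
next
  assume "leg_system_solvable {y. pendant E y} depth"
  then obtain X t where top: "\<forall>y. pendant E y \<longrightarrow> X = t y * leg_coeff (depth y)"
    and centre: "2 * X = (\<Sum>y | pendant E y. t y * leg_coeff (depth y - 1))"
    and nontrivial: "X \<noteq> 0 \<or> (\<exists>y. pendant E y \<and> t y \<noteq> 0)"
    by (auto simp: leg_system_solvable_def)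
  have "spider_vector X t \<noteq> 0"
    using nontrivial
  proof
    assume "X \<noteq> 0"
    then show ?thesis by (auto simp: spider_vector_def vec_eq_iff)
  next
    assume "\<exists>y. pendant E y \<and> t y \<noteq> 0"
    then obtain y where "pendant E y" "t y \<noteq> 0" by blast
    then have "spider_vector X t $ y \<noteq> 0" using spider_vector_leg[of y 0 X t] top by simp
    then show ?thesis by auto
  qed
  then show "is_eigenvalue (laplacian E) 1"
    using laplacian_spider_vector[OF top centre] by (auto simp: is_eigenvalue_def)
qed

end

theorem mainTheorem9:
  fixes E :: "'n::finite \<Rightarrow> 'n \<Rightarrow> bool" and m :: 'n
  assumes "is_tree E"
    and "card {v. pendant E v} = 3"
    and "major E m"
  shows "is_eigenvalue (laplacian E) 1 \<longleftrightarrow>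
    ((\<exists>u1 u2. pendant E u1 \<and> pendant E u2 \<and> u1 \<noteq> u2 \<and>
        gdist E u1 m mod 3 = 1 \<and> gdist E u2 m mod 3 = 1) \<or>
     (\<exists>u1 u2 u3. pendant E u1 \<and> pendant E u2 \<and> pendant E u3 \<and>
        u1 \<noteq> u2 \<and> u1 \<noteq> u3 \<and> u2 \<noteq> u3 \<and>
        gdist E u1 m mod 3 = 2 \<and> gdist E u2 m mod 3 = 0 \<and> gdist E u3 m mod 3 = 0))"
proof -
  interpret spider E m
    using assms by (intro spider.intro rooted_tree.intro spider_axioms.intro)
  have legs_pos: "\<forall>y\<in>{v. pendant E v}. 0 < gdist E y m"
    using pendant_ne_root by (simp add: gdist_eq_depth depth_pos_iff)
  have "is_eigenvalue (laplacian E) 1 \<longleftrightarrow> leg_system_solvable {v. pendant E v} (\<lambda>v. gdist E v m)"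
    using eigenvalue_one_iff_leg_system_solvable by (simp add: gdist_eq_depth)
  then show ?thesis using leg_system_solvable_iff[OF three_pendants legs_pos] by simp
qed

end
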